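(* Let $\Omega\subset\mathbb{R}^n$ be a bounded open set. Any viscosity solution $u$ of $\Delta_\infty u-|Du|^2=0$ in $\Omega$ is a viscosity supersolution of $\frac{\Delta_\infty u}{|Du|^2}=1$ in $\Omega$.
   Context: $\Delta_\infty u=\sum_{i,j=1}^n u_{x_i}u_{x_j}u_{x_ix_j}$. Viscosity solution of $\Delta_\infty u-|Du|^2=0$: $u$ continuous, and whenever $\phi\in C^2$ and $u-\phi$ has a local maximum (resp. minimum) at $x$, $\Delta_\infty\phi(x)-|D\phi(x)|^2\ge0$ (resp. $\le0$). Viscosity supersolution of $\frac{\Delta_\infty u}{|Du|^2}=1$: whenever $\phi\in C^2(\Omega)$ and $u-\phi$ has a local minimum at $x\in\Omega$, then $\frac{\Delta_\infty\phi(x)}{|D\phi(x)|^2}\le1$ if $D\phi(x)\ne0$, and $\min_{|p|=1}p\cdot D^2\phi(x)\,p\le1$ if $D\phi(x)=0$. *)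

theory Defs
  imports "HOL-Analysis.Analysis"
begin

definition grad :: "(real^'n \<Rightarrow> real) \<Rightarrow> real^'n \<Rightarrow> real^'n" where
  "grad \<phi> x = (\<chi> i. frechet_derivative \<phi> (at x) (axis i 1))"

definition hess :: "(real^'n \<Rightarrow> real) \<Rightarrow> real^'n \<Rightarrow> real^'n^'n" where
  "hess \<phi> x = (\<chi> i j. frechet_derivative (\<lambda>y. grad \<phi> y $ i) (at x) (axis j 1))"

definition C2_on :: "(real^'n \<Rightarrow> real) \<Rightarrow> (real^'n) set \<Rightarrow> bool" where
  "C2_on \<phi> \<Omega> \<longleftrightarrow>
     (\<forall>x\<in>\<Omega>. \<phi> differentiable (at x)) \<and>
     (\<forall>x\<in>\<Omega>. \<forall>i. (\<lambda>y. grad \<phi> y $ i) differentiable (at x)) \<and>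
     continuous_on \<Omega> (hess \<phi>)"

definition inf_lap :: "(real^'n \<Rightarrow> real) \<Rightarrow> real^'n \<Rightarrow> real" where
  "inf_lap \<phi> x = (\<Sum>i\<in>UNIV. \<Sum>j\<in>UNIV. grad \<phi> x $ i * grad \<phi> x $ j * hess \<phi> x $ i $ j)"

definition local_max_at :: "(real^'n \<Rightarrow> real) \<Rightarrow> (real^'n) set \<Rightarrow> real^'n \<Rightarrow> bool" where
  "local_max_at f \<Omega> x \<longleftrightarrow> x \<in> \<Omega> \<and> (\<exists>e>0. \<forall>y\<in>ball x e \<inter> \<Omega>. f y \<le> f x)"

definition local_min_at :: "(real^'n \<Rightarrow> real) \<Rightarrow> (real^'n) set \<Rightarrow> real^'n \<Rightarrow> bool" where
  "local_min_at f \<Omega> x \<longleftrightarrow> x \<in> \<Omega> \<and> (\<exists>e>0. \<forall>y\<in>ball x e \<inter> \<Omega>. f x \<le> f y)"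

definition visc_sol :: "(real^'n \<Rightarrow> real) \<Rightarrow> (real^'n) set \<Rightarrow> bool" where
  "visc_sol u \<Omega> \<longleftrightarrow> continuous_on \<Omega> u \<and>
     (\<forall>\<phi> x. C2_on \<phi> \<Omega> \<longrightarrow> local_max_at (\<lambda>y. u y - \<phi> y) \<Omega> x \<longrightarrow>
        inf_lap \<phi> x - (norm (grad \<phi> x))\<^sup>2 \<ge> 0) \<and>
     (\<forall>\<phi> x. C2_on \<phi> \<Omega> \<longrightarrow> local_min_at (\<lambda>y. u y - \<phi> y) \<Omega> x \<longrightarrow>
        inf_lap \<phi> x - (norm (grad \<phi> x))\<^sup>2 \<le> 0)"

definition visc_supersol_norm :: "(real^'n \<Rightarrow> real) \<Rightarrow> (real^'n) set \<Rightarrow> bool" where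
  "visc_supersol_norm u \<Omega> \<longleftrightarrow>
     (\<forall>\<phi> x. C2_on \<phi> \<Omega> \<longrightarrow> local_min_at (\<lambda>y. u y - \<phi> y) \<Omega> x \<longrightarrow>
        (if grad \<phi> x \<noteq> 0 then inf_lap \<phi> x / (norm (grad \<phi> x))\<^sup>2 \<le> 1
         else Inf {p \<bullet> (hess \<phi> x *v p) | p. norm p = 1} \<le> 1))"

end

theory Submission
  imports Defs
begin

text \<open>Where \<open>D\<phi>(x) \<noteq> 0\<close> the claim is the viscosity inequality for \<open>u\<close> divided by
\<open>|D\<phi>(x)|\<^sup>2\<close>. At a critical point suppose \<open>p \<bullet> D\<^sup>2\<phi>(x) p > 1\<close> uniformly on the unit sphere. Then
\<open>\<phi>\<close>, and hence \<open>u\<close>, grows at least like \<open>\<mu>/2 |y - x|\<^sup>2\<close> near \<open>x\<close> for some \<open>\<mu> > 1\<close>.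
Touching \<open>u\<close> from below by the paraboloid \<open>\<mu>'/2 |y - z|\<^sup>2\<close> with \<open>1 < \<mu>' < \<mu>\<close> and vertex \<open>z\<close>
slightly off \<open>x\<close> gives an interior touching point \<open>y\<^sub>0 \<noteq> z\<close>, where the paraboloid violates the
supersolution inequality: there \<open>\<Delta>\<^sub>\<infinity> - |D\<cdot>|\<^sup>2 = (\<mu>'\<^sup>3 - \<mu>'\<^sup>2) |y\<^sub>0 - z|\<^sup>2 > 0\<close>.\<close>

lemma linear_eq_inner_axis:
  fixes f :: "real^'n \<Rightarrow> real"
  assumes "linear f"
  shows "f v = (\<chi> i. f (axis i 1)) \<bullet> v"
proof -
  have "f v = f (\<Sum>i\<in>UNIV. v$i *s axis i 1)" by (simp add: basis_expansion)
  also have "\<dots> = (\<Sum>i\<in>UNIV. v$i * f (axis i 1))"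
    using assms by (simp add: linear_sum linear_scale scalar_mult_eq_scaleR)
  finally show ?thesis by (simp add: inner_vec_def mult.commute)
qed

lemma has_derivative_grad:
  assumes "\<phi> differentiable (at y)"
  shows "(\<phi> has_derivative (\<lambda>v. grad \<phi> y \<bullet> v)) (at y)"
proof -
  have d: "(\<phi> has_derivative frechet_derivative \<phi> (at y)) (at y)"
    using assms frechet_derivative_works by blast
  then have "linear (frechet_derivative \<phi> (at y))"
    using has_derivative_linear by blast
  then have "frechet_derivative \<phi> (at y) = (\<lambda>v. grad \<phi> y \<bullet> v)"
    by (intro ext, subst linear_eq_inner_axis) (simp_all add: grad_def)
  with d show ?thesis by simp
qed

lemma has_derivative_grad_hess:
  assumes "\<And>i. (\<lambda>y. grad \<phi> y $ i) differentiable (at x)"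
  shows "(grad \<phi> has_derivative (\<lambda>v. hess \<phi> x *v v)) (at x)"
proof -
  have "((\<lambda>y. grad \<phi> y \<bullet> b) has_derivative (\<lambda>v. (hess \<phi> x *v v) \<bullet> b)) (at x)"
    if "b \<in> Basis" for b
  proof -
    from that obtain i where b: "b = axis i 1" by (auto simp: Basis_vec_def)
    have d: "((\<lambda>y. grad \<phi> y $ i) has_derivative
               frechet_derivative (\<lambda>y. grad \<phi> y $ i) (at x)) (at x)"
      using assms[of i] frechet_derivative_works by blast
    then have "linear (frechet_derivative (\<lambda>y. grad \<phi> y $ i) (at x))"
      using has_derivative_linear by blast
    then have "frechet_derivative (\<lambda>y. grad \<phi> y $ i) (at x) = (\<lambda>v. (hess \<phi> x *v v) $ i)"
      by (intro ext, subst linear_eq_inner_axis)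
        (simp_all add: hess_def matrix_vector_mult_def inner_vec_def mult.commute)
    with d show ?thesis unfolding b cart_eq_inner_axis[symmetric] by simp
  qed
  then show ?thesis
    by (subst has_derivative_componentwise_within[where S=UNIV, simplified]) blast
qed

lemma has_real_derivative_along_line:
  assumes "\<phi> differentiable (at (x + t *\<^sub>R h))"
  shows "((\<lambda>t. \<phi> (x + t *\<^sub>R h)) has_real_derivative (grad \<phi> (x + t *\<^sub>R h) \<bullet> h)) (at t)"
proof -
  have "((\<lambda>t. x + t *\<^sub>R h) has_derivative (\<lambda>s. s *\<^sub>R h)) (at t)"
    by (auto intro!: derivative_eq_intros)
  from has_derivative_compose[OF this has_derivative_grad[OF assms]]
  show ?thesis
    by (simp add: has_field_derivative_def mult_commute_abs)
qed

lemma radial_quadratic_growth: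
  fixes \<phi> :: "real^'n \<Rightarrow> real"
  assumes diff: "\<And>y. y \<in> cball x r \<Longrightarrow> \<phi> differentiable (at y)"
    and radial: "\<And>y. y \<in> cball x r \<Longrightarrow> \<mu> * (norm (y - x))\<^sup>2 \<le> grad \<phi> y \<bullet> (y - x)"
    and y: "y \<in> cball x r"
  shows "\<phi> x + \<mu> / 2 * (norm (y - x))\<^sup>2 \<le> \<phi> y"
proof -
  define h where "h = y - x"
  have nh: "norm h \<le> r" using y by (simp add: h_def dist_norm norm_minus_commute)
  have seg: "x + t *\<^sub>R h \<in> cball x r" if "0 \<le> t" "t \<le> 1" for t
  proof -
    have "t * norm h \<le> norm h" using that mult_right_mono[of t 1 "norm h"] by simp
    then show ?thesis using that nh by (simp add: dist_norm)
  qed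
  define g where "g t = \<phi> (x + t *\<^sub>R h) - \<mu> / 2 * t\<^sup>2 * (norm h)\<^sup>2" for t
  have deriv: "(g has_real_derivative grad \<phi> (x + t *\<^sub>R h) \<bullet> h - \<mu> * t * (norm h)\<^sup>2) (at t)"
    if "0 \<le> t" "t \<le> 1" for t
  proof -
    have "((\<lambda>t. \<mu> / 2 * t\<^sup>2 * (norm h)\<^sup>2) has_real_derivative \<mu> * t * (norm h)\<^sup>2) (at t)"
      by (auto intro!: derivative_eq_intros)
    with has_real_derivative_along_line[OF diff[OF seg[OF that]]] show ?thesis
      unfolding g_def by (rule DERIV_diff)
  qed
  have "g 0 \<le> g 1"
  proof (rule DERIV_nonneg_imp_increasing_open[of 0 1 g])
    show "continuous_on {0..1} g"
      by (intro continuous_at_imp_continuous_on ballI DERIV_isCont[OF deriv]) auto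
    fix t :: real assume t: "0 < t" "t < 1"
    have "t * (\<mu> * t * (norm h)\<^sup>2) = \<mu> * (norm (t *\<^sub>R h))\<^sup>2"
      using t by (simp add: power_mult_distrib power2_eq_square)
    also have "\<dots> \<le> t * (grad \<phi> (x + t *\<^sub>R h) \<bullet> h)"
      using radial[OF seg] t by simp
    finally have "\<mu> * t * (norm h)\<^sup>2 \<le> grad \<phi> (x + t *\<^sub>R h) \<bullet> h"
      using t by simp
    with deriv[of t] t show "\<exists>y. (g has_real_derivative y) (at t) \<and> 0 \<le> y"
      by (intro exI[of _ "grad \<phi> (x + t *\<^sub>R h) \<bullet> h - \<mu> * t * (norm h)\<^sup>2"]) auto
  qed simp
  then show ?thesis by (simp add: g_def h_def)
qed

lemma Inf_quadratic_form_le: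
  fixes H :: "real^'n^'n"
  shows "Inf {p \<bullet> (H *v p) | p. norm p = 1} * (norm h)\<^sup>2 \<le> h \<bullet> (H *v h)"
proof (cases "h = 0")
  case False
  obtain K where K: "\<And>v. norm (H *v v) \<le> norm v * K"
    using bounded_linear.bounded[OF matrix_vector_mul_bounded_linear[of H]] by blast
  have bdd: "bdd_below {p \<bullet> (H *v p) | p. norm p = 1}"
  proof (rule bdd_belowI)
    fix s assume "s \<in> {p \<bullet> (H *v p) | p. norm p = 1}"
    then obtain p where p: "norm p = 1" "s = p \<bullet> (H *v p)" by blast
    have "\<bar>s\<bar> \<le> norm p * norm (H *v p)" using p(2) Cauchy_Schwarz_ineq2 by simp
    also have "\<dots> \<le> K" using K[of p] p(1) by simp
    finally show "- K \<le> s" by linarith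
  qed
  define p where "p = (1 / norm h) *\<^sub>R h"
  have "norm p = 1" using False by (simp add: p_def)
  then have "Inf {p \<bullet> (H *v p) | p. norm p = 1} \<le> p \<bullet> (H *v p)"
    by (intro cInf_lower[OF _ bdd]) blast
  then have "Inf {p \<bullet> (H *v p) | p. norm p = 1} * (norm h)\<^sup>2 \<le> (p \<bullet> (H *v p)) * (norm h)\<^sup>2"
    by (rule mult_right_mono) simp
  also have "\<dots> = h \<bullet> (H *v h)"
  proof -
    have hp: "h = norm h *\<^sub>R p" using False by (simp add: p_def)
    show ?thesis
      by (subst (2 3) hp) (simp add: matrix_vector_mult_scaleR power2_eq_square mult_ac)
  qed
  finally show ?thesis .
qed simp

lemma quadratic_growth_at_critical_point:
  fixes \<phi> :: "real^'n \<Rightarrow> real"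
  assumes "open S" "x \<in> S" and diff: "\<And>y. y \<in> S \<Longrightarrow> \<phi> differentiable (at y)"
    and D2: "(grad \<phi> has_derivative (\<lambda>v. H *v v)) (at x)" and crit: "grad \<phi> x = 0"
    and coercive: "\<And>h. \<kappa> * (norm h)\<^sup>2 \<le> h \<bullet> (H *v h)" and "\<mu> < \<kappa>"
  shows "\<exists>r>0. cball x r \<subseteq> S \<and> (\<forall>y\<in>cball x r. \<phi> x + \<mu> / 2 * (norm (y - x))\<^sup>2 \<le> \<phi> y)"
proof -
  have "\<kappa> - \<mu> > 0" using \<open>\<mu> < \<kappa>\<close> by simp
  with D2 obtain d where "d > 0" and d: "\<And>y. norm (y - x) < d \<Longrightarrow>
      norm (grad \<phi> y - grad \<phi> x - H *v (y - x)) \<le> (\<kappa> - \<mu>) * norm (y - x)"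
    unfolding has_derivative_at_alt by blast
  obtain r0 where "r0 > 0" "cball x r0 \<subseteq> S"
    using assms(1,2) open_contains_cball by blast
  define r where "r = min r0 (d / 2)"
  have "r > 0" using \<open>r0 > 0\<close> \<open>d > 0\<close> by (simp add: r_def)
  have rS: "cball x r \<subseteq> S" using \<open>cball x r0 \<subseteq> S\<close> by (auto simp: r_def)
  have radial: "\<mu> * (norm (y - x))\<^sup>2 \<le> grad \<phi> y \<bullet> (y - x)" if "y \<in> cball x r" for y
  proof -
    define v where "v = y - x"
    have "norm v < d"
      using that \<open>d > 0\<close> by (simp add: v_def r_def dist_norm norm_minus_commute)
    then have err: "norm (grad \<phi> y - H *v v) \<le> (\<kappa> - \<mu>) * norm v"
      using d[of y] crit by (simp add: v_def)
    have "- ((\<kappa> - \<mu>) * (norm v)\<^sup>2) \<le> (grad \<phi> y - H *v v) \<bullet> v"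
    proof -
      have "- ((grad \<phi> y - H *v v) \<bullet> v) \<le> norm (grad \<phi> y - H *v v) * norm v"
        using Cauchy_Schwarz_ineq2[of "grad \<phi> y - H *v v" v] by arith
      also have "\<dots> \<le> (\<kappa> - \<mu>) * (norm v)\<^sup>2"
        using mult_right_mono[OF err norm_ge_zero] by (simp add: power2_eq_square mult.assoc)
      finally show ?thesis by linarith
    qed
    moreover have "\<kappa> * (norm v)\<^sup>2 \<le> v \<bullet> (H *v v)" by (rule coercive)
    moreover have "grad \<phi> y \<bullet> v = (grad \<phi> y - H *v v) \<bullet> v + v \<bullet> (H *v v)"
      by (simp add: inner_diff_left inner_commute[of v "H *v v"])
    ultimately have "\<mu> * (norm v)\<^sup>2 \<le> grad \<phi> y \<bullet> v"
      unfolding left_diff_distrib by linarith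
    then show ?thesis by (simp add: v_def)
  qed
  show ?thesis
  proof (intro exI[of _ r] conjI ballI)
    fix y assume "y \<in> cball x r"
    show "\<phi> x + \<mu> / 2 * (norm (y - x))\<^sup>2 \<le> \<phi> y"
      by (rule radial_quadratic_growth[OF _ radial \<open>y \<in> cball x r\<close>]) (use rS diff in blast)
  qed (use \<open>r > 0\<close> rS in auto)
qed

definition paraboloid :: "real \<Rightarrow> real^'n \<Rightarrow> real^'n \<Rightarrow> real" where
  "paraboloid c z y = c / 2 * ((y - z) \<bullet> (y - z))"

lemma paraboloid_eq: "paraboloid c z y = c / 2 * (norm (y - z))\<^sup>2"
  by (simp add: paraboloid_def power2_norm_eq_inner)

lemma grad_paraboloid: "grad (paraboloid c z) y = c *\<^sub>R (y - z)"
proof -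
  have "(paraboloid c z has_derivative (\<lambda>v. c / 2 * (v \<bullet> (y - z) + (y - z) \<bullet> v))) (at y)"
    unfolding paraboloid_def by (auto intro!: derivative_eq_intros)
  then have "frechet_derivative (paraboloid c z) (at y) = (\<lambda>v. c / 2 * (v \<bullet> (y - z) + (y - z) \<bullet> v))"
    using frechet_derivative_at by metis
  then show ?thesis
    by (simp add: grad_def vec_eq_iff inner_axis' inner_commute)
qed

lemma grad_paraboloid_component:
  "(\<lambda>y. grad (paraboloid c z) y $ i) = (\<lambda>y. c * ((y - z) \<bullet> axis i 1))"
  by (simp add: grad_paraboloid inner_axis)

lemma hess_paraboloid: "hess (paraboloid c z) y = mat c"
proof -
  have "((\<lambda>y. grad (paraboloid c z) y $ i) has_derivative (\<lambda>v. c * (v \<bullet> axis i 1))) (at y)" for i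
    unfolding grad_paraboloid_component by (auto intro!: derivative_eq_intros)
  then have "frechet_derivative (\<lambda>y. grad (paraboloid c z) y $ i) (at y) = (\<lambda>v. c * (v \<bullet> axis i 1))" for i
    using frechet_derivative_at by metis
  then show ?thesis
    by (simp add: hess_def vec_eq_iff mat_def inner_axis_axis)
qed

lemma C2_on_paraboloid: "C2_on (paraboloid c z) S"
proof -
  have "paraboloid c z differentiable (at y)" for y
    unfolding paraboloid_def by (auto intro!: derivative_eq_intros simp: differentiable_def)
  moreover have "(\<lambda>y. grad (paraboloid c z) y $ i) differentiable (at x)" for i x
    unfolding grad_paraboloid_component by (auto intro!: derivative_eq_intros simp: differentiable_def)
  ultimately show ?thesis unfolding C2_on_def hess_paraboloid by auto
qed

lemma inf_lap_paraboloid: "inf_lap (paraboloid c z) y = c ^ 3 * (norm (y - z))\<^sup>2"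
proof -
  define g where "g = c *\<^sub>R (y - z)"
  have row: "(\<Sum>j\<in>UNIV. g $ i * g $ j * mat c $ i $ j) = g $ i * g $ i * c" for i
  proof -
    have "(\<Sum>j\<in>UNIV. g $ i * g $ j * mat c $ i $ j) = (\<Sum>j\<in>UNIV. if i = j then g $ i * g $ j * c else 0)"
      by (rule sum.cong) (auto simp: mat_def)
    then show ?thesis by (simp add: sum.delta)
  qed
  have "inf_lap (paraboloid c z) y = (\<Sum>i\<in>UNIV. g $ i * g $ i * c)"
    unfolding inf_lap_def grad_paraboloid hess_paraboloid g_def[symmetric] by (simp add: row)
  also have "\<dots> = c ^ 3 * ((y - z) \<bullet> (y - z))"
    by (simp add: sum_distrib_left g_def power3_eq_cube mult_ac inner_vec_def)
  finally show ?thesis by (simp add: power2_norm_eq_inner)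
qed

lemma inf_lap_minus_grad_paraboloid:
  "inf_lap (paraboloid c z) y - (norm (grad (paraboloid c z) y))\<^sup>2 = (c ^ 3 - c\<^sup>2) * (norm (y - z))\<^sup>2"
proof -
  have "(norm (grad (paraboloid c z) y))\<^sup>2 = c\<^sup>2 * (norm (y - z))\<^sup>2"
    by (simp add: grad_paraboloid power_mult_distrib)
  then show ?thesis by (simp add: inf_lap_paraboloid algebra_simps)
qed

lemma paraboloid_touches_in_interior:
  fixes u :: "real^'n \<Rightarrow> real"
  assumes cont: "continuous_on (cball x r) u" and "r > 0" "0 < \<mu>'" "\<mu>' < \<mu>"
    and growth: "\<And>y. y \<in> cball x r \<Longrightarrow> u x + \<mu> / 2 * (norm (y - x))\<^sup>2 \<le> u y"
  obtains z y\<^sub>0 where "y\<^sub>0 \<in> ball x r" "y\<^sub>0 \<noteq> z"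
    "\<And>y. y \<in> cball x r \<Longrightarrow> u y\<^sub>0 - paraboloid \<mu>' z y\<^sub>0 \<le> u y - paraboloid \<mu>' z y"
proof -
  obtain a :: "real^'n" where a: "norm a = 1" using norm_axis_1 by blast
  \<comment> \<open>\<open>\<delta>\<close> is small enough that the touching point cannot lie on the sphere \<open>|y - x| = r\<close>.\<close>
  define \<delta> where "\<delta> = (\<mu> - \<mu>') * r / (4 * \<mu>')"
  have "\<delta> > 0" using assms(2-4) by (simp add: \<delta>_def)
  have shift: "\<mu>' * \<delta> = (\<mu> - \<mu>') * r / 4" using \<open>0 < \<mu>'\<close> by (simp add: \<delta>_def)
  define z where "z = x + \<delta> *\<^sub>R a"
  have "norm (z - x) = \<delta>" using a \<open>\<delta> > 0\<close> by (simp add: z_def)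
  define w where "w y = u y - paraboloid \<mu>' z y" for y
  have "continuous_on (cball x r) w"
    unfolding w_def paraboloid_def by (intro continuous_intros cont)
  moreover have "cball x r \<noteq> {}" using \<open>r > 0\<close> by simp
  ultimately obtain y\<^sub>0 where y\<^sub>0: "y\<^sub>0 \<in> cball x r" and min: "\<And>y. y \<in> cball x r \<Longrightarrow> w y\<^sub>0 \<le> w y"
    using continuous_attains_inf[OF compact_cball] by blast
  have "u y\<^sub>0 - \<mu>' / 2 * (norm (y\<^sub>0 - z))\<^sup>2 \<le> u x - \<mu>' / 2 * \<delta>\<^sup>2"
    using min[of x] \<open>r > 0\<close> \<open>norm (z - x) = \<delta>\<close>
    by (simp add: w_def paraboloid_eq norm_minus_commute)
  with growth[OF y\<^sub>0]
  have upper: "\<mu> / 2 * (norm (y\<^sub>0 - x))\<^sup>2 + \<mu>' / 2 * \<delta>\<^sup>2 \<le> \<mu>' / 2 * (norm (y\<^sub>0 - z))\<^sup>2"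
    by linarith
  have "y\<^sub>0 \<noteq> z"
  proof
    assume "y\<^sub>0 = z"
    with upper \<open>norm (z - x) = \<delta>\<close> have "\<mu> / 2 * \<delta>\<^sup>2 + \<mu>' / 2 * \<delta>\<^sup>2 \<le> 0" by simp
    moreover have "0 < \<mu> / 2 * \<delta>\<^sup>2 + \<mu>' / 2 * \<delta>\<^sup>2"
      using \<open>\<delta> > 0\<close> \<open>0 < \<mu>'\<close> \<open>\<mu>' < \<mu>\<close> by (intro add_pos_pos mult_pos_pos) auto
    ultimately show False by linarith
  qed
  moreover have "y\<^sub>0 \<in> ball x r"
  proof (rule ccontr)
    assume "y\<^sub>0 \<notin> ball x r"
    then have "norm (y\<^sub>0 - x) = r" using y\<^sub>0 by (simp add: dist_norm norm_minus_commute)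
    have "norm (y\<^sub>0 - z) \<le> r + \<delta>"
      using norm_triangle_ineq4[of "y\<^sub>0 - x" "\<delta> *\<^sub>R a"] \<open>norm (y\<^sub>0 - x) = r\<close> a \<open>\<delta> > 0\<close>
      by (simp add: z_def algebra_simps)
    have "\<mu> / 2 * r\<^sup>2 + \<mu>' / 2 * \<delta>\<^sup>2 \<le> \<mu>' / 2 * (norm (y\<^sub>0 - z))\<^sup>2"
      using upper \<open>norm (y\<^sub>0 - x) = r\<close> by simp
    also have "\<dots> \<le> \<mu>' / 2 * (r + \<delta>)\<^sup>2"
      using \<open>norm (y\<^sub>0 - z) \<le> r + \<delta>\<close> \<open>0 < \<mu>'\<close> by (simp add: power_mono)
    also have "\<dots> = \<mu>' / 2 * r\<^sup>2 + r * (\<mu>' * \<delta>) + \<mu>' / 2 * \<delta>\<^sup>2"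
      by (simp add: power2_eq_square algebra_simps)
    also have "\<dots> = \<mu>' / 2 * r\<^sup>2 + (\<mu> - \<mu>') * r\<^sup>2 / 4 + \<mu>' / 2 * \<delta>\<^sup>2"
      using shift by (simp add: power2_eq_square)
    finally have "(\<mu> - \<mu>') * r\<^sup>2 \<le> 0" by (simp add: field_simps)
    moreover have "0 < (\<mu> - \<mu>') * r\<^sup>2" using \<open>r > 0\<close> \<open>\<mu>' < \<mu>\<close> by simp
    ultimately show False by linarith
  qed
  ultimately show thesis using that min by (simp add: w_def)
qed

lemma local_min_at_if_min_on_cball:
  assumes "y\<^sub>0 \<in> ball x r" "cball x r \<subseteq> \<Omega>" "\<And>y. y \<in> cball x r \<Longrightarrow> f y\<^sub>0 \<le> f y"
  shows "local_min_at f \<Omega> y\<^sub>0"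
  unfolding local_min_at_def
proof (intro conjI exI[of _ "r - dist x y\<^sub>0"] ballI)
  show "y\<^sub>0 \<in> \<Omega>" "r - dist x y\<^sub>0 > 0" using assms(1,2) by auto
  fix y assume "y \<in> ball y\<^sub>0 (r - dist x y\<^sub>0) \<inter> \<Omega>"
  then have "y \<in> cball x r" using dist_triangle[of x y y\<^sub>0] by simp
  then show "f y\<^sub>0 \<le> f y" by (rule assms(3))
qed

lemma visc_sol_supersolD:
  assumes "visc_sol u \<Omega>" "C2_on \<phi> \<Omega>" "local_min_at (\<lambda>y. u y - \<phi> y) \<Omega> x"
  shows "inf_lap \<phi> x - (norm (grad \<phi> x))\<^sup>2 \<le> 0"
  using assms unfolding visc_sol_def by blast

lemma visc_sol_Inf_hess_form_le_1_at_critical_point: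
  fixes u \<phi> :: "real^'n \<Rightarrow> real"
  assumes "open \<Omega>" and sol: "visc_sol u \<Omega>" and C2: "C2_on \<phi> \<Omega>"
    and touch: "local_min_at (\<lambda>y. u y - \<phi> y) \<Omega> x" and crit: "grad \<phi> x = 0"
  shows "Inf {p \<bullet> (hess \<phi> x *v p) | p. norm p = 1} \<le> 1"
proof (rule ccontr)
  define \<kappa> where "\<kappa> = Inf {p \<bullet> (hess \<phi> x *v p) | p. norm p = 1}"
  assume "\<not> ?thesis"
  then have "1 < \<kappa>" by (simp add: \<kappa>_def)
  define \<mu> where "\<mu> = (1 + 2 * \<kappa>) / 3"
  define \<mu>' where "\<mu>' = (2 + \<kappa>) / 3"
  have "1 < \<mu>'" "\<mu>' < \<mu>" "\<mu> < \<kappa>" using \<open>1 < \<kappa>\<close> by (simp_all add: \<mu>_def \<mu>'_def)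
  obtain e where "e > 0" and e: "\<And>y. y \<in> ball x e \<inter> \<Omega> \<Longrightarrow> u x - \<phi> x \<le> u y - \<phi> y"
    and "x \<in> \<Omega>" using touch unfolding local_min_at_def by blast
  have "\<exists>r>0. cball x r \<subseteq> \<Omega> \<inter> ball x e \<and>
      (\<forall>y\<in>cball x r. \<phi> x + \<mu> / 2 * (norm (y - x))\<^sup>2 \<le> \<phi> y)"
  proof (rule quadratic_growth_at_critical_point)
    show "open (\<Omega> \<inter> ball x e)" "x \<in> \<Omega> \<inter> ball x e"
      using \<open>open \<Omega>\<close> \<open>x \<in> \<Omega>\<close> \<open>e > 0\<close> by auto
    show "\<And>y. y \<in> \<Omega> \<inter> ball x e \<Longrightarrow> \<phi> differentiable (at y)"
      using C2 by (auto simp: C2_on_def)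
    show "(grad \<phi> has_derivative (\<lambda>v. hess \<phi> x *v v)) (at x)"
      using C2 \<open>x \<in> \<Omega>\<close> by (intro has_derivative_grad_hess) (auto simp: C2_on_def)
    show "\<And>h. \<kappa> * (norm h)\<^sup>2 \<le> h \<bullet> (hess \<phi> x *v h)"
      unfolding \<kappa>_def by (rule Inf_quadratic_form_le)
  qed (use crit \<open>\<mu> < \<kappa>\<close> in auto)
  then obtain r where "r > 0" and r\<Omega>: "cball x r \<subseteq> \<Omega>" and re: "cball x r \<subseteq> ball x e"
    and growth_\<phi>: "\<And>y. y \<in> cball x r \<Longrightarrow> \<phi> x + \<mu> / 2 * (norm (y - x))\<^sup>2 \<le> \<phi> y"
    by auto
  have growth_u: "u x + \<mu> / 2 * (norm (y - x))\<^sup>2 \<le> u y" if "y \<in> cball x r" for y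
  proof -
    have "y \<in> ball x e \<inter> \<Omega>" using that r\<Omega> re by blast
    from e[OF this] growth_\<phi>[OF that] show ?thesis by linarith
  qed
  have "continuous_on (cball x r) u"
    using sol r\<Omega> continuous_on_subset unfolding visc_sol_def by blast
  moreover have "0 < \<mu>'" using \<open>1 < \<mu>'\<close> by simp
  ultimately obtain z y\<^sub>0 where "y\<^sub>0 \<in> ball x r" "y\<^sub>0 \<noteq> z"
    and min: "\<And>y. y \<in> cball x r \<Longrightarrow> u y\<^sub>0 - paraboloid \<mu>' z y\<^sub>0 \<le> u y - paraboloid \<mu>' z y"
    using paraboloid_touches_in_interior[OF _ \<open>r > 0\<close> _ \<open>\<mu>' < \<mu>\<close> growth_u] by blast
  have "local_min_at (\<lambda>y. u y - paraboloid \<mu>' z y) \<Omega> y\<^sub>0"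
    using \<open>y\<^sub>0 \<in> ball x r\<close> r\<Omega> min by (rule local_min_at_if_min_on_cball)
  from visc_sol_supersolD[OF sol C2_on_paraboloid this]
  have "(\<mu>' ^ 3 - \<mu>'\<^sup>2) * (norm (y\<^sub>0 - z))\<^sup>2 \<le> 0"
    by (simp add: inf_lap_minus_grad_paraboloid)
  moreover have "0 < (\<mu>' ^ 3 - \<mu>'\<^sup>2) * (norm (y\<^sub>0 - z))\<^sup>2"
  proof -
    have "\<mu>' ^ 3 - \<mu>'\<^sup>2 = \<mu>'\<^sup>2 * (\<mu>' - 1)" by (simp add: power2_eq_square power3_eq_cube algebra_simps)
    then show ?thesis using \<open>1 < \<mu>'\<close> \<open>y\<^sub>0 \<noteq> z\<close> by simp
  qed
  ultimately show False by linarith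
qed

theorem theorem2p4:
  fixes \<Omega> :: "(real^'n) set" and u :: "real^'n \<Rightarrow> real"
  assumes "bounded \<Omega>" and "open \<Omega>"
    and "visc_sol u \<Omega>"
  shows "visc_supersol_norm u \<Omega>"
  unfolding visc_supersol_norm_def
proof (intro allI impI)
  fix \<phi> x
  assume C2: "C2_on \<phi> \<Omega>" and touch: "local_min_at (\<lambda>y. u y - \<phi> y) \<Omega> x"
  show "if grad \<phi> x \<noteq> 0 then inf_lap \<phi> x / (norm (grad \<phi> x))\<^sup>2 \<le> 1
        else Inf {p \<bullet> (hess \<phi> x *v p) | p. norm p = 1} \<le> 1"
  proof (cases "grad \<phi> x = 0")
    case True
    with visc_sol_Inf_hess_form_le_1_at_critical_point[OF assms(2,3) C2 touch]
    show ?thesis by simp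
  next
    case False
    with visc_sol_supersolD[OF assms(3) C2 touch] show ?thesis
      by (simp add: pos_divide_le_eq)
  qed
qed

end
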